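(* For each fixed $n$, there are only finitely many balls $B(v,n,K)$ ($v$ a vertex of $K$) up to cell-preserving isomorphism.
   Context: $K$ is the pentagonal combinatorial tiling: a 2-dimensional CW-complex homeomorphic to the open disk, obtained as follows. The subdivision rule $\omega$ acts on a pentagon with boundary vertices $v_1,\dots,v_5$ in cyclic order (indices mod 5): add a vertex $m_i$ inside each edge $v_iv_{i+1}$, interior vertices $c_1,\dots,c_5$, edges $c_ic_{i+1}$ and $c_im_i$, and replace the face by the central pentagon $c_1\cdots c_5$ and petals $v_i\,m_i\,c_i\,c_{i-1}\,m_{i-1}$. $K_0$ is one pentagon, $K_n=\omega^n(K_0)$, $K_n$ embeds onto the central superpentagon $\omega^n(\text{central face of }\omega(K_0))$ of $K_{n+1}$, and $K$ is the direct limit. $B(v,n,K)$ is the subcomplex of $K$ consisting of the faces all of whose vertices are at edge-path distance at most $n$ from $v$, with their edges and vertices. *)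

theory Defs
  imports Main "HOL-Library.FSet"
begin

text \<open>Base i: the i-th vertex of the initial pentagon; Mid S: the new vertex inside the
edge with endpoint set S; Cen l i: the interior vertex c_i created in the face whose
boundary cycle is the list l.\<close>

datatype vert = Base nat | Mid "vert fset" | Cen "vert list" nat

text \<open>A pentagonal face is stored as the cyclic list [v0,...,v4] of its boundary vertices.\<close>

definition P0 :: "vert list" where
  "P0 = map Base [0..<5]"

definition nxt :: "nat \<Rightarrow> nat" where "nxt i = (i + 1) mod 5"
definition prv :: "nat \<Rightarrow> nat" where "prv i = (i + 4) mod 5"

definition midv :: "vert list \<Rightarrow> nat \<Rightarrow> vert" where
  "midv l i = Mid {| l ! i, l ! nxt i |}"

definition cenv :: "vert list \<Rightarrow> nat \<Rightarrow> vert" where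
  "cenv l i = Cen l i"

definition central :: "vert list \<Rightarrow> vert list" where
  "central l = map (cenv l) [0..<5]"

definition petal :: "vert list \<Rightarrow> nat \<Rightarrow> vert list" where
  "petal l i = [l ! i, midv l i, cenv l i, cenv l (prv i), midv l (prv i)]"

definition omega :: "vert list set \<Rightarrow> vert list set" where
  "omega F = (\<Union>l\<in>F. insert (central l) {petal l i | i. i < 5})"

definition Kn :: "nat \<Rightarrow> vert list set" where
  "Kn n = (omega ^^ n) {P0}"

definition face_edges :: "vert list \<Rightarrow> vert set set" where
  "face_edges l = {{l ! i, l ! nxt i} | i. i < 5}"

definition lverts :: "vert list set \<Rightarrow> vert set" where
  "lverts F = (\<Union>l\<in>F. set l)"

definition ledges :: "vert list set \<Rightarrow> vert set set" where
  "ledges F = (\<Union>l\<in>F. face_edges l)"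

text \<open>The embedding K_n \<rightarrow> K_(n+1) onto the central superpentagon: it is induced by
v_i \<mapsto> c_i (the central face of omega(K_0)), propagated through the subdivisions.\<close>

primrec emb :: "vert \<Rightarrow> vert" where
  "emb (Base i) = Cen P0 i"
| "emb (Mid S) = Mid (fimage emb S)"
| "emb (Cen l i) = Cen (map emb l) i"

text \<open>A point of the direct limit is the equivalence class of (n,v), v a vertex of K_n,
where (n,v) ~ (m,w) iff they agree after embedding both into K_(n+m).\<close>

definition cls :: "nat \<Rightarrow> vert \<Rightarrow> (nat \<times> vert) set" where
  "cls n v = {(m, w). (emb ^^ n) w = (emb ^^ m) v}"

text \<open>A 2-complex: vertices, edges (as sets of their two endpoints) and faces (as sets of
their boundary edges).\<close>

type_synonym 'a cx = "'a set \<times> 'a set set \<times> 'a set set set"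

definition KV :: "(nat \<times> vert) set set" where
  "KV = {cls n v | n v. v \<in> lverts (Kn n)}"

definition KE :: "(nat \<times> vert) set set set" where
  "KE = {cls n ` e | n e. e \<in> ledges (Kn n)}"

definition KF :: "(nat \<times> vert) set set set set" where
  "KF = {(\<lambda>e. cls n ` e) ` face_edges l | n l. l \<in> Kn n}"

definition K :: "(nat \<times> vert) set cx" where
  "K = (KV, KE, KF)"

definition within :: "'a set set \<Rightarrow> nat \<Rightarrow> 'a \<Rightarrow> 'a \<Rightarrow> bool" where
  "within E k u v \<longleftrightarrow> (\<exists>xs. xs \<noteq> [] \<and> hd xs = u \<and> last xs = v \<and> length xs \<le> Suc k \<and>
      (\<forall>i. Suc i < length xs \<longrightarrow> {xs ! i, xs ! Suc i} \<in> E))"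

definition ball :: "'a cx \<Rightarrow> 'a \<Rightarrow> nat \<Rightarrow> 'a cx" where
  "ball X v n = (let E = fst (snd X);
                     BF = {f \<in> snd (snd X). \<forall>x \<in> \<Union>f. within E n v x}
                 in (\<Union>(\<Union> BF), \<Union> BF, BF))"

definition cx_iso :: "'a cx \<Rightarrow> 'b cx \<Rightarrow> bool" where
  "cx_iso X Y \<longleftrightarrow> (\<exists>h. bij_betw h (fst X) (fst Y) \<and>
      (image h) ` fst (snd X) = fst (snd Y) \<and>
      (image (image h)) ` snd (snd X) = snd (snd Y))"

end

theory Submission
  imports Defs
begin

text \<open>Every vertex of \<open>K\<close> has at most 20 neighbours. In each \<open>K\<^sub>n\<close> every edge lies on at most two
pentagons and every vertex on at most four, and both bounds survive one subdivision step; hence a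
vertex of \<open>K\<^sub>n\<close> has at most \<open>4 \<cdot> 5\<close> neighbours, and since the embeddings \<open>K\<^sub>n \<rightarrow> K\<^sub>n\<^sub>+\<^sub>1\<close> preserve
edges the same bound holds in the direct limit. So a ball of radius \<open>n\<close> has at most \<open>21\<^sup>n\<close>
vertices, and complexes with a bounded number of vertices fall into finitely many isomorphism
types.\<close>

section \<open>Bounded degree and finitely many isomorphism types\<close>

lemma within_0_eq: "within E 0 u v \<Longrightarrow> v = u"
  by (auto simp: within_def le_Suc_eq length_Suc_conv)

lemma within_SucD:
  assumes "within E (Suc k) u v"
  shows "within E k u v \<or> (\<exists>w. within E k u w \<and> {w, v} \<in> E)"
proof (cases "within E k u v")
  case False
  from assms obtain xs where xs: "xs \<noteq> []" "hd xs = u" "last xs = v" "length xs \<le> Suc (Suc k)"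
    and path: "\<And>i. Suc i < length xs \<Longrightarrow> {xs ! i, xs ! Suc i} \<in> E"
    unfolding within_def by blast
  have "\<not> length xs \<le> Suc k"
  proof
    assume "length xs \<le> Suc k"
    then have "within E k u v" unfolding within_def using xs path by blast
    then show False using False by contradiction
  qed
  then have len: "length xs = Suc (Suc k)" using xs(4) by simp
  define ys where "ys = butlast xs"
  have ys: "length ys = Suc k" "\<And>i. i < length ys \<Longrightarrow> ys ! i = xs ! i"
    using len by (simp_all add: ys_def nth_butlast)
  then have "ys \<noteq> []" by auto
  have "within E k u (xs ! k)"
    unfolding within_def
  proof (intro exI conjI allI impI)
    show "ys \<noteq> []" "length ys \<le> Suc k" using \<open>ys \<noteq> []\<close> ys by simp_all
    show "hd ys = u" using ys \<open>ys \<noteq> []\<close> xs(1,2) by (metis hd_conv_nth length_greater_0_conv)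
    show "last ys = xs ! k" using ys \<open>ys \<noteq> []\<close> by (simp add: last_conv_nth)
    show "{ys ! i, ys ! Suc i} \<in> E" if "Suc i < length ys" for i using that ys path len by auto
  qed
  moreover have "{xs ! k, v} \<in> E" using path[of k] xs(1,3) len by (simp add: last_conv_nth)
  ultimately show ?thesis by blast
qed simp

lemma finite_card_within:
  assumes deg: "\<And>x. finite {y. {x, y} \<in> E} \<and> card {y. {x, y} \<in> E} \<le> d"
  shows "finite {y. within E k v y} \<and> card {y. within E k v y} \<le> Suc d ^ k"
proof (induction k)
  case 0
  have sub: "{y. within E 0 v y} \<subseteq> {v}" by (auto dest: within_0_eq)
  then show ?case using card_mono[OF _ sub] finite_subset[OF sub] by simp
next
  case (Suc k)
  let ?W = "{y. within E k v y}"
  have fW: "finite ?W" and cW: "card ?W \<le> Suc d ^ k" using Suc.IH by auto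
  let ?N = "\<Union>w\<in>?W. {y. {w, y} \<in> E}"
  have sub: "{y. within E (Suc k) v y} \<subseteq> ?W \<union> ?N"
    using within_SucD[of E k v] by blast
  have fin: "finite (?W \<union> ?N)" using fW deg by blast
  have "card (?W \<union> ?N) \<le> card ?W + card ?N" by (rule card_Un_le)
  also have "card ?N \<le> (\<Sum>w\<in>?W. card {y. {w, y} \<in> E})" by (rule card_UN_le[OF fW])
  also have "(\<Sum>w\<in>?W. card {y. {w, y} \<in> E}) \<le> card ?W * d"
    using sum_bounded_above[of ?W "\<lambda>w. card {y. {w, y} \<in> E}" d] deg by simp
  finally have "card (?W \<union> ?N) \<le> Suc d * card ?W" by (simp add: mult.commute)
  also have "\<dots> \<le> Suc d ^ Suc k" using mult_le_mono2[OF cW, of "Suc d"] by simp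
  finally show ?case using sub fin by (meson card_mono finite_subset le_trans)
qed

lemma ball_vertices_within: "fst (ball X v n) \<subseteq> {y. within (fst (snd X)) n v y}"
  by (auto simp: ball_def Let_def)

lemma ball_edges_Pow: "fst (snd (ball X v n)) \<subseteq> Pow (fst (ball X v n))"
  by (auto simp: ball_def Let_def)

lemma ball_faces_Pow: "snd (snd (ball X v n)) \<subseteq> Pow (Pow (fst (ball X v n)))"
  by (auto simp: ball_def Let_def)

lemma cx_iso_image:
  assumes "inj_on h V"
  shows "cx_iso (V, E, F) (h ` V, image h ` E, image (image h) ` F)"
  unfolding cx_iso_def using inj_on_imp_bij_betw[OF assms] by auto

lemma finite_cx_iso_classes:
  assumes "infinite (UNIV :: 'b set)"
  obtains S :: "'b cx set" where "finite S"
    and "\<And>X :: 'a cx. finite (fst X) \<Longrightarrow> card (fst X) \<le> N \<Longrightarrow> fst (snd X) \<subseteq> Pow (fst X) \<Longrightarrow>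
           snd (snd X) \<subseteq> Pow (Pow (fst X)) \<Longrightarrow> \<exists>B\<in>S. cx_iso X B"
proof -
  obtain A :: "'b set" where A: "finite A" "card A = N"
    using infinite_arbitrarily_large[OF assms] by blast
  show thesis
  proof
    show "finite (Pow A \<times> Pow (Pow A) \<times> Pow (Pow (Pow A)))" using A(1) by simp
    fix X :: "'a cx"
    assume V: "finite (fst X)" "card (fst X) \<le> N" and E: "fst (snd X) \<subseteq> Pow (fst X)"
      and F: "snd (snd X) \<subseteq> Pow (Pow (fst X))"
    obtain h where h: "h ` fst X \<subseteq> A" "inj_on h (fst X)"
      using card_le_inj[OF V(1) A(1)] V(2) A(2) by auto
    have "image h ` fst (snd X) \<subseteq> Pow A" using h(1) E by blast
    moreover have "image (image h) ` snd (snd X) \<subseteq> Pow (Pow A)" using h(1) F by blast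
    ultimately have "(h ` fst X, image h ` fst (snd X), image (image h) ` snd (snd X))
        \<in> Pow A \<times> Pow (Pow A) \<times> Pow (Pow (Pow A))" using h(1) by simp
    moreover have "cx_iso X (h ` fst X, image h ` fst (snd X), image (image h) ` snd (snd X))"
      using cx_iso_image[OF h(2), of "fst (snd X)" "snd (snd X)"] by simp
    ultimately show "\<exists>B\<in>Pow A \<times> Pow (Pow A) \<times> Pow (Pow (Pow A)). cx_iso X B" by (rule bexI[rotated])
  qed
qed

section \<open>Subdivision invariants\<close>

primrec level :: "vert \<Rightarrow> nat" where
  "level (Base i) = 0"
| "level (Mid S) = Suc (Max (insert 0 (fset (level |`| S))))"
| "level (Cen l i) = Suc (Max (insert 0 (set (map level l))))"

definition pos :: "'a list \<Rightarrow> 'a \<Rightarrow> nat" where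
  "pos l u = (THE j. j < length l \<and> l ! j = u)"

lemma pos_nth: "distinct l \<Longrightarrow> j < length l \<Longrightarrow> pos l (l ! j) = j"
  unfolding pos_def by (rule the_equality) (auto simp: nth_eq_iff_index_eq)

lemma less_5_cases: "(i::nat) < 5 \<Longrightarrow> i = 0 \<or> i = 1 \<or> i = 2 \<or> i = 3 \<or> i = 4"
  by auto

lemma nxt_less: "nxt i < 5" by (simp add: nxt_def)
lemma prv_less: "prv i < 5" by (simp add: prv_def)
lemma nxt_prv: "i < 5 \<Longrightarrow> nxt (prv i) = i" unfolding nxt_def prv_def by (drule less_5_cases) auto
lemma nxt_neq: "i < 5 \<Longrightarrow> nxt i \<noteq> i" unfolding nxt_def by (drule less_5_cases) auto
lemma prv_neq: "i < 5 \<Longrightarrow> prv i \<noteq> i" unfolding prv_def by (drule less_5_cases) auto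
lemma nxt_neq_prv: "i < 5 \<Longrightarrow> nxt i \<noteq> prv i" unfolding nxt_def prv_def by (drule less_5_cases) auto
lemma nxt_numeral: "nxt 0 = 1" "nxt (Suc 0) = 2" "nxt 2 = 3" "nxt 3 = 4" "nxt 4 = 0"
  by (simp_all add: nxt_def)

lemma set_central: "set (central l) = {Cen l j | j. j < 5}"
  by (auto simp: central_def cenv_def)

lemma set_petal: "set (petal l i) = {l ! i, midv l i, Cen l i, Cen l (prv i), midv l (prv i)}"
  by (auto simp: petal_def cenv_def)

lemma petal_nth:
  "petal l i ! 0 = l ! i" "petal l i ! Suc 0 = midv l i" "petal l i ! 2 = Cen l i"
  "petal l i ! 3 = Cen l (prv i)" "petal l i ! 4 = midv l (prv i)"
  by (simp_all add: petal_def cenv_def)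

lemma petal_eq_petalD: "petal l i = petal l' j \<Longrightarrow> l = l' \<and> i = j"
  by (simp add: petal_def cenv_def)

lemma midv_eq_midvD: "midv l i = midv l' j \<Longrightarrow> {l ! i, l ! nxt i} = {l' ! j, l' ! nxt j}"
  unfolding midv_def by (metis vert.inject(2) finsert.rep_eq bot_fset.rep_eq)

lemma midv_neq_Cen [simp]: "midv l i \<noteq> Cen l' j" "Cen l' j \<noteq> midv l i"
  by (simp_all add: midv_def)

lemma mem_omega: "f \<in> omega F \<longleftrightarrow> (\<exists>l\<in>F. f = central l \<or> (\<exists>i<5. f = petal l i))"
  by (auto simp: omega_def)

definition faces_at :: "vert list set \<Rightarrow> vert \<Rightarrow> vert list set" where
  "faces_at F u = {f \<in> F. u \<in> set f}"

text \<open>\<open>F\<close> plays the role of the faces of \<open>K\<^sub>m\<close>. By \<open>edge_level\<close> the maximal level \<open>m\<close> occurs on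
every edge, so every vertex created by \<open>omega F\<close> has level exactly \<open>m + 1\<close>; this is how old and
new vertices of \<open>omega F\<close> are told apart. The two face counts are the invariants behind the degree
bound.\<close>

locale pentagon_complex =
  fixes m :: nat and F :: "vert list set"
  assumes finite_faces: "finite F"
    and length_face: "l \<in> F \<Longrightarrow> length l = 5"
    and distinct_face: "l \<in> F \<Longrightarrow> distinct l"
    and level_le: "l \<in> F \<Longrightarrow> v \<in> set l \<Longrightarrow> level v \<le> m"
    and edge_level: "l \<in> F \<Longrightarrow> k < 5 \<Longrightarrow> level (l ! k) = m \<or> level (l ! nxt k) = m"
    and card_edge_faces:
      "l \<in> F \<Longrightarrow> k < 5 \<Longrightarrow> card (faces_at F (l ! k) \<inter> faces_at F (l ! nxt k)) \<le> 2"
    and card_faces_at: "card (faces_at F u) \<le> 4"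
begin

lemma level_nth_le: "l \<in> F \<Longrightarrow> k < 5 \<Longrightarrow> level (l ! k) \<le> m"
  using level_le length_face by (metis nth_mem)

lemma level_Cen: "l \<in> F \<Longrightarrow> level (Cen l j) = Suc m"
proof -
  assume l: "l \<in> F"
  have "Max (insert 0 (set (map level l))) = m"
  proof (rule Max_eqI)
    show "y \<le> m" if "y \<in> insert 0 (set (map level l))" for y using that level_le[OF l] by auto
    have "l ! 0 \<in> set l" "l ! nxt 0 \<in> set l" using length_face[OF l] nxt_less by simp_all
    then show "m \<in> insert 0 (set (map level l))" using edge_level[OF l, of 0] by auto
  qed simp
  then show ?thesis by simp
qed

lemma level_midv: "l \<in> F \<Longrightarrow> k < 5 \<Longrightarrow> level (midv l k) = Suc m"
  using edge_level[of l k] level_nth_le[of l k] level_nth_le[of l "nxt k"] nxt_less[of k]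
  by (auto simp: midv_def)

lemma faces_at_omega_Cen:
  assumes "l \<in> F" "j < 5"
  shows "faces_at (omega F) (Cen l j) \<subseteq> {central l, petal l j, petal l (nxt j)}"
proof
  fix f assume "f \<in> faces_at (omega F) (Cen l j)"
  then obtain l' where l': "l' \<in> F" and c: "Cen l j \<in> set f"
    and "f = central l' \<or> (\<exists>i<5. f = petal l' i)" by (auto simp: faces_at_def mem_omega)
  then consider "f = central l'" | i where "i < 5" "f = petal l' i" by blast
  then show "f \<in> {central l, petal l j, petal l (nxt j)}"
  proof cases
    case 1 then show ?thesis using c by (auto simp: set_central)
  next
    case (2 i)
    have "Cen l j \<noteq> l' ! i" using level_Cen[OF assms(1)] level_nth_le[OF l' 2(1)] by (metis Suc_n_not_le_n)
    then show ?thesis using c 2 nxt_prv by (auto simp: set_petal)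
  qed
qed

lemma faces_at_omega_old:
  assumes "level u \<le> m"
  shows "faces_at (omega F) u \<subseteq> (\<lambda>l. petal l (pos l u)) ` faces_at F u"
proof
  fix f assume "f \<in> faces_at (omega F) u"
  then obtain l where l: "l \<in> F" and c: "u \<in> set f"
    and "f = central l \<or> (\<exists>i<5. f = petal l i)" by (auto simp: faces_at_def mem_omega)
  then consider "f = central l" | i where "i < 5" "f = petal l i" by blast
  then show "f \<in> (\<lambda>l. petal l (pos l u)) ` faces_at F u"
  proof cases
    case 1 then show ?thesis using c assms level_Cen[OF l] by (auto simp: set_central)
  next
    case (2 i)
    have "u = l ! i" using c 2 assms level_Cen[OF l] level_midv[OF l] prv_less by (auto simp: set_petal)
    moreover have "l \<in> faces_at F u" using \<open>u = l ! i\<close> 2(1) l length_face[OF l] by (simp add: faces_at_def)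
    ultimately show ?thesis using 2 pos_nth[OF distinct_face[OF l], of i] length_face[OF l]
      by (auto intro: rev_image_eqI)
  qed
qed

lemma faces_at_omega_midv:
  assumes "l \<in> F" "k < 5" "f \<in> faces_at (omega F) (midv l k)"
  shows "\<exists>l' \<in> faces_at F (l ! k) \<inter> faces_at F (l ! nxt k).
           \<exists>i<5. f = petal l' i \<and> l' ! i \<in> {l ! k, l ! nxt k}"
proof -
  obtain l' where l': "l' \<in> F" and c: "midv l k \<in> set f"
    and "f = central l' \<or> (\<exists>i<5. f = petal l' i)" using assms(3) by (auto simp: faces_at_def mem_omega)
  then obtain i where i: "i < 5" "f = petal l' i" using c by (auto simp: set_central)
  have "midv l k \<noteq> l' ! i" using level_midv[OF assms(1,2)] level_nth_le[OF l' i(1)] by auto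
  then have "midv l k = midv l' i \<or> midv l k = midv l' (prv i)" using c i by (auto simp: set_petal)
  then have "{l ! k, l ! nxt k} = {l' ! i, l' ! nxt i} \<or> {l ! k, l ! nxt k} = {l' ! prv i, l' ! i}"
    using midv_eq_midvD nxt_prv[OF i(1)] by metis
  moreover have "l' ! i \<in> set l'" "l' ! nxt i \<in> set l'" "l' ! prv i \<in> set l'"
    using length_face[OF l'] i nxt_less prv_less by auto
  ultimately have "l' \<in> faces_at F (l ! k) \<inter> faces_at F (l ! nxt k)" "l' ! i \<in> {l ! k, l ! nxt k}"
    using l' by (auto simp: faces_at_def doubleton_eq_iff)
  then show ?thesis using i by blast
qed

lemma card_faces_at_omega_Cen:
  assumes "l \<in> F" "j < 5"
  shows "card (faces_at (omega F) (Cen l j)) \<le> 4"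
proof -
  have "card (faces_at (omega F) (Cen l j)) \<le> card {central l, petal l j, petal l (nxt j)}"
    by (rule card_mono[OF _ faces_at_omega_Cen[OF assms]]) simp
  also have "\<dots> \<le> 3" using card_length[of "[central l, petal l j, petal l (nxt j)]"] by simp
  finally show ?thesis by simp
qed

lemma card_faces_at_omega_old: "level u \<le> m \<Longrightarrow> card (faces_at (omega F) u) \<le> 4"
  using surj_card_le[OF _ faces_at_omega_old] finite_faces card_faces_at[of u]
  by (force simp: faces_at_def)

lemma card_faces_at_omega_midv:
  assumes l: "l \<in> F" and k: "k < 5"
  shows "card (faces_at (omega F) (midv l k)) \<le> 4"
proof -
  let ?A = "(faces_at F (l ! k) \<inter> faces_at F (l ! nxt k)) \<times> {l ! k, l ! nxt k}"
  have "faces_at (omega F) (midv l k) \<subseteq> (\<lambda>(l', c). petal l' (pos l' c)) ` ?A"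
  proof
    fix f assume "f \<in> faces_at (omega F) (midv l k)"
    from faces_at_omega_midv[OF l k this] obtain l' i
      where l': "l' \<in> faces_at F (l ! k) \<inter> faces_at F (l ! nxt k)"
      and i: "i < 5" "f = petal l' i" "l' ! i \<in> {l ! k, l ! nxt k}" by blast
    have "l' \<in> F" using l' by (simp add: faces_at_def)
    then have "pos l' (l' ! i) = i" using pos_nth[OF distinct_face] length_face i(1) by simp
    then show "f \<in> (\<lambda>(l', c). petal l' (pos l' c)) ` ?A"
      using l' i by (auto intro!: image_eqI[of _ _ "(l', l' ! i)"])
  qed
  then have "card (faces_at (omega F) (midv l k)) \<le> card ?A"
    by (rule surj_card_le[rotated]) (simp add: finite_faces faces_at_def)
  also have "card ?A = card (faces_at F (l ! k) \<inter> faces_at F (l ! nxt k)) * card {l ! k, l ! nxt k}"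
    by (rule card_cartesian_product)
  also have "\<dots> \<le> 2 * 2"
    using card_edge_faces[OF l k] card_length[of "[l ! k, l ! nxt k]"] by (intro mult_mono) auto
  finally show ?thesis by simp
qed

lemma card_faces_at_omega: "card (faces_at (omega F) u) \<le> 4"
proof (cases "faces_at (omega F) u = {}")
  case False
  then obtain l f where l: "l \<in> F" and u: "u \<in> set f" and "f = central l \<or> (\<exists>i<5. f = petal l i)"
    by (auto simp: faces_at_def mem_omega)
  then consider j where "j < 5" "u = Cen l j" | i where "i < 5" "u \<in> set (petal l i)"
    by (auto simp: set_central)
  then show ?thesis
  proof cases
    case (1 j) then show ?thesis using card_faces_at_omega_Cen[OF l] by simp
  next
    case (2 i)
    then consider "u = l ! i" | "u = midv l i" | "u = Cen l i" | "u = Cen l (prv i)" | "u = midv l (prv i)"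
      by (auto simp: set_petal)
    then show ?thesis
      using 2(1) prv_less[of i] level_nth_le[OF l] card_faces_at_omega_old
        card_faces_at_omega_Cen[OF l] card_faces_at_omega_midv[OF l] by cases auto
  qed
qed simp

lemma card_edge_faces_omega_half:
  assumes l: "l \<in> F" and j: "j < 5" and c: "c \<in> {l ! j, l ! nxt j}"
  shows "card (faces_at (omega F) c \<inter> faces_at (omega F) (midv l j)) \<le> 2"
proof -
  have "level c \<le> m" using c level_nth_le[OF l] j nxt_less by auto
  let ?G = "faces_at F (l ! j) \<inter> faces_at F (l ! nxt j)"
  have "faces_at (omega F) c \<inter> faces_at (omega F) (midv l j) \<subseteq> (\<lambda>l'. petal l' (pos l' c)) ` ?G"
  proof
    fix f assume f: "f \<in> faces_at (omega F) c \<inter> faces_at (omega F) (midv l j)"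
    from faces_at_omega_midv[OF l j] f obtain l' i where "l' \<in> ?G" "f = petal l' i" by blast
    moreover from faces_at_omega_old[OF \<open>level c \<le> m\<close>] f obtain l2
      where "f = petal l2 (pos l2 c)" by blast
    ultimately show "f \<in> (\<lambda>l'. petal l' (pos l' c)) ` ?G" using petal_eq_petalD by blast
  qed
  then have "card (faces_at (omega F) c \<inter> faces_at (omega F) (midv l j)) \<le> card ?G"
    by (rule surj_card_le[rotated]) (simp add: finite_faces faces_at_def)
  then show ?thesis using card_edge_faces[OF l j] by simp
qed

lemma card_edge_faces_omega_spoke:
  assumes l: "l \<in> F" and j: "j < 5"
  shows "card (faces_at (omega F) (midv l j) \<inter> faces_at (omega F) (Cen l j)) \<le> 2"
proof -
  have "faces_at (omega F) (midv l j) \<inter> faces_at (omega F) (Cen l j) \<subseteq> {petal l j, petal l (nxt j)}"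
    using faces_at_omega_Cen[OF l j] by (auto simp: faces_at_def set_central)
  then have "card (faces_at (omega F) (midv l j) \<inter> faces_at (omega F) (Cen l j))
      \<le> card {petal l j, petal l (nxt j)}"
    by (rule card_mono[rotated]) simp
  then show ?thesis using card_length[of "[petal l j, petal l (nxt j)]"] by simp
qed

lemma card_edge_faces_omega_central:
  assumes l: "l \<in> F" and j: "j < 5"
  shows "card (faces_at (omega F) (Cen l j) \<inter> faces_at (omega F) (Cen l (nxt j))) \<le> 2"
proof -
  have "Cen l (nxt j) \<noteq> l ! j" using level_Cen[OF l] level_nth_le[OF l j] by (metis Suc_n_not_le_n)
  then have "Cen l (nxt j) \<notin> set (petal l j)" using nxt_neq[OF j] nxt_neq_prv[OF j] by (auto simp: set_petal)
  then have "faces_at (omega F) (Cen l j) \<inter> faces_at (omega F) (Cen l (nxt j))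
      \<subseteq> {central l, petal l (nxt j)}"
    using faces_at_omega_Cen[OF l j] by (auto simp: faces_at_def)
  then have "card (faces_at (omega F) (Cen l j) \<inter> faces_at (omega F) (Cen l (nxt j)))
      \<le> card {central l, petal l (nxt j)}"
    by (rule card_mono[rotated]) simp
  then show ?thesis using card_length[of "[central l, petal l (nxt j)]"] by simp
qed

lemma card_edge_faces_omega:
  assumes f: "f \<in> omega F" and k: "k < 5"
  shows "card (faces_at (omega F) (f ! k) \<inter> faces_at (omega F) (f ! nxt k)) \<le> 2"
proof -
  obtain l where l: "l \<in> F" and "f = central l \<or> (\<exists>i<5. f = petal l i)" using f by (auto simp: mem_omega)
  then consider "f = central l" | i where "i < 5" "f = petal l i" by blast
  then show ?thesis
  proof cases
    case 1
    then show ?thesis using card_edge_faces_omega_central[OF l k] k nxt_less[of k]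
      by (simp add: central_def cenv_def)
  next
    case (2 i)
    have p: "prv i < 5" by (rule prv_less)
    have "l ! nxt (prv i) = l ! i" using nxt_prv[OF 2(1)] by simp
    with less_5_cases[OF k] show ?thesis
      using 2 card_edge_faces_omega_half[OF l 2(1), of "l ! i"] card_edge_faces_omega_half[OF l p, of "l ! i"]
        card_edge_faces_omega_spoke[OF l 2(1)] card_edge_faces_omega_spoke[OF l p]
        card_edge_faces_omega_central[OF l p] nxt_prv[OF 2(1)]
      by (auto simp: petal_nth nxt_numeral Int_commute)
  qed
qed

lemma level_petal_nth:
  assumes "l \<in> F" "i < 5" "k < 5"
  shows "level (petal l i ! k) = (if k = 0 then level (l ! i) else Suc m)"
  using less_5_cases[OF assms(3)] level_midv[OF assms(1)] level_Cen[OF assms(1)] assms(2) prv_less[of i]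
  by (auto simp: petal_nth)

lemma distinct_petal:
  assumes l: "l \<in> F" and i: "i < 5"
  shows "distinct (petal l i)"
proof -
  have "midv l i \<noteq> midv l (prv i)"
  proof
    assume "midv l i = midv l (prv i)"
    then have "{l ! i, l ! nxt i} = {l ! prv i, l ! i}" using midv_eq_midvD nxt_prv[OF i] by metis
    then have "l ! nxt i = l ! prv i" using nxt_neq[OF i] distinct_face[OF l] length_face[OF l] i nxt_less
      by (auto simp: doubleton_eq_iff nth_eq_iff_index_eq)
    then show False using distinct_face[OF l] length_face[OF l] nxt_less prv_less nxt_neq_prv[OF i]
      by (simp add: nth_eq_iff_index_eq)
  qed
  moreover have "level (l ! i) < level v" if "v \<in> {midv l i, midv l (prv i), Cen l i, Cen l (prv i)}" for v
    using that level_nth_le[OF l i] level_midv[OF l] level_Cen[OF l] i prv_less[of i] by auto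
  ultimately show ?thesis using prv_neq[OF i] by (auto simp: petal_def cenv_def)
qed

lemma pentagon_complex_omega: "pentagon_complex (Suc m) (omega F)"
proof
  show "finite (omega F)" using finite_faces by (auto simp: omega_def)
next
  fix f assume "f \<in> omega F"
  then obtain l where l: "l \<in> F" and "f = central l \<or> (\<exists>i<5. f = petal l i)" by (auto simp: mem_omega)
  then consider "f = central l" | i where "i < 5" "f = petal l i" by blast
  then have "length f = 5 \<and> distinct f \<and> (\<forall>k<5. level (f ! k) \<le> Suc m) \<and>
      (\<forall>k<5. level (f ! k) = Suc m \<or> level (f ! nxt k) = Suc m)"
  proof cases
    case 1
    then show ?thesis using level_Cen[OF l] by (auto simp: central_def cenv_def distinct_map inj_on_def)
  next
    case (2 i)
    have "nxt k \<noteq> 0" if "k = 0" for k using that by (simp add: nxt_def)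
    then show ?thesis using 2 distinct_petal[OF l 2(1)] level_petal_nth[OF l 2(1)] nxt_less
      level_nth_le[OF l 2(1)] by (auto simp: petal_def)
  qed
  then show "length f = 5" "distinct f"
    and "\<And>k. k < 5 \<Longrightarrow> level (f ! k) = Suc m \<or> level (f ! nxt k) = Suc m"
    and "\<And>v. v \<in> set f \<Longrightarrow> level v \<le> Suc m" by (auto simp: in_set_conv_nth)
next
  show "\<And>l k. l \<in> omega F \<Longrightarrow> k < 5 \<Longrightarrow>
      card (faces_at (omega F) (l ! k) \<inter> faces_at (omega F) (l ! nxt k)) \<le> 2"
    by (rule card_edge_faces_omega)
  show "\<And>u. card (faces_at (omega F) u) \<le> 4" by (rule card_faces_at_omega)
qed

lemma finite_card_neighbours: "finite {b. {a, b} \<in> ledges F} \<and> card {b. {a, b} \<in> ledges F} \<le> 20"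
proof -
  have sub: "{b. {a, b} \<in> ledges F} \<subseteq> (\<Union>l\<in>faces_at F a. set l)"
  proof
    fix b assume "b \<in> {b. {a, b} \<in> ledges F}"
    then obtain l i where l: "l \<in> F" "i < 5" "{a, b} = {l ! i, l ! nxt i}"
      by (auto simp: ledges_def face_edges_def)
    then have "a \<in> set l" "b \<in> set l" using length_face[OF l(1)] nxt_less by (auto simp: doubleton_eq_iff)
    then show "b \<in> (\<Union>l\<in>faces_at F a. set l)" using l(1) by (auto simp: faces_at_def)
  qed
  have fin: "finite (faces_at F a)" using finite_faces by (simp add: faces_at_def)
  have "card (\<Union>l\<in>faces_at F a. set l) \<le> (\<Sum>l\<in>faces_at F a. card (set l))" by (rule card_UN_le[OF fin])
  also have "\<dots> \<le> card (faces_at F a) * 5"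
  proof -
    have "card (set l) \<le> 5" if "l \<in> faces_at F a" for l
      using that card_length[of l] length_face by (auto simp: faces_at_def)
    then show ?thesis using sum_bounded_above[of "faces_at F a" "\<lambda>l. card (set l)" 5] by simp
  qed
  also have "\<dots> \<le> 20" using card_faces_at[of a] by simp
  finally show ?thesis using sub fin by (meson card_mono finite_UN_I finite_set finite_subset le_trans)
qed

end

lemma pentagon_complex_P0: "pentagon_complex 0 {P0}"
proof
  show "card (faces_at {P0} a \<inter> faces_at {P0} b) \<le> 2" for a b
    by (rule order_trans[OF card_mono[of "{P0}"]]) (auto simp: faces_at_def)
  show "card (faces_at {P0} u) \<le> 4" for u
    by (rule order_trans[OF card_mono[of "{P0}"]]) (auto simp: faces_at_def)
qed (auto simp: P0_def distinct_map inj_on_def)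

lemma pentagon_complex_Kn: "pentagon_complex n (Kn n)"
  by (induction n) (simp_all add: Kn_def pentagon_complex_P0 pentagon_complex.pentagon_complex_omega)

section \<open>The direct limit\<close>

lemma image_eq_imageD:
  assumes inj: "\<And>x y. x \<in> A \<Longrightarrow> f x = f y \<Longrightarrow> x = y" and eq: "f ` A = f ` B"
  shows "A = B"
proof (intro equalityI subsetI)
  fix x
  assume "x \<in> A"
  then have "f x \<in> f ` B" using eq by blast
  then obtain y where "y \<in> B" "f x = f y" by blast
  then show "x \<in> B" using inj[OF \<open>x \<in> A\<close>] by simp
next
  fix x
  assume "x \<in> B"
  then have "f x \<in> f ` A" using eq by blast
  then obtain y where "y \<in> A" "f y = f x" by (metis imageE)
  then show "x \<in> A" using inj[OF \<open>y \<in> A\<close>] by simp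
qed

lemma map_eq_mapD:
  assumes inj: "\<And>x y. x \<in> set xs \<Longrightarrow> f x = f y \<Longrightarrow> x = y" and eq: "map f xs = map f ys"
  shows "xs = ys"
proof (rule nth_equalityI)
  show len: "length xs = length ys" using eq by (metis length_map)
  fix i assume "i < length xs"
  moreover have "f (xs ! i) = f (ys ! i)" using eq len \<open>i < length xs\<close> by (metis nth_map)
  ultimately show "xs ! i = ys ! i" using inj nth_mem by blast
qed

lemma emb_neq_Base [simp]: "emb x \<noteq> Base i" "Base i \<noteq> emb x"
  by (cases x; simp)+

lemma map_emb_neq_P0 [simp]: "map emb l \<noteq> P0" "P0 \<noteq> map emb l"
proof -
  have "hd P0 = Base 0" "P0 \<noteq> []" by (simp_all add: P0_def upt_rec)
  then have "hd (map emb l) \<noteq> hd P0 \<or> map emb l = [] \<and> P0 \<noteq> []" by (cases l) simp_all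
  then show "map emb l \<noteq> P0" "P0 \<noteq> map emb l" by auto
qed

lemma inj_emb: "inj emb"
proof (rule injI)
  show "emb x = emb y \<Longrightarrow> x = y" for x y
  proof (induction x arbitrary: y)
    case (Base i)
    then show ?case by (cases y) simp_all
  next
    case (Mid S)
    have "\<exists>T. y = Mid T \<and> emb |`| S = emb |`| T" using Mid.prems by (cases y) simp_all
    then obtain T where y: "y = Mid T" and "emb |`| S = emb |`| T" by blast
    then have "fset (emb |`| S) = fset (emb |`| T)" by simp
    then have "emb ` fset S = emb ` fset T" by (simp only: fimage.rep_eq)
    moreover have "x = x'" if "x \<in> fset S" "emb x = emb x'" for x x' using that by (rule Mid.IH)
    ultimately have "fset S = fset T" by (rule image_eq_imageD[rotated])
    then show ?case using y by (simp add: fset_inject)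
  next
    case (Cen l i)
    from Cen.prems obtain l' where y: "y = Cen l' i" and "map emb l = map emb l'" by (cases y) simp_all
    then have "l = l'" using map_eq_mapD[OF Cen.IH] by blast
    then show ?case using y by simp
  qed
qed

lemma inj_cls: "inj (cls m)"
proof (rule injI)
  fix a b assume "cls m a = cls m b"
  moreover have "(m, a) \<in> cls m a" by (simp add: cls_def)
  ultimately have "(emb ^^ m) a = (emb ^^ m) b" by (simp add: cls_def)
  then show "a = b" using inj_fn[OF inj_emb] by (rule injD[rotated])
qed

lemma cls_Suc_emb: "cls (Suc m) (emb a) = cls m a"
proof -
  have "(emb ^^ Suc m) w = (emb ^^ k) (emb a) \<longleftrightarrow> (emb ^^ m) w = (emb ^^ k) a" for k w
  proof -
    have "(emb ^^ k) (emb a) = emb ((emb ^^ k) a)" by (simp add: funpow_swap1)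
    then show ?thesis using inj_emb by (simp add: inj_eq)
  qed
  then show ?thesis by (simp add: cls_def)
qed

lemma map_emb_central: "map emb (central l) = central (map emb l)"
  by (simp add: central_def cenv_def)

lemma map_emb_petal: "length l = 5 \<Longrightarrow> i < 5 \<Longrightarrow> map emb (petal l i) = petal (map emb l) i"
  using nxt_less[of i] prv_less[of i] nxt_less[of "prv i"] by (simp add: petal_def cenv_def midv_def)

lemma map_emb_omega:
  assumes "\<And>l. l \<in> F \<Longrightarrow> length l = 5"
  shows "map emb ` omega F \<subseteq> omega (map emb ` F)"
proof
  fix f assume "f \<in> map emb ` omega F"
  then obtain g where f: "f = map emb g" and "g \<in> omega F" by blast
  then obtain l where l: "l \<in> F" and "g = central l \<or> (\<exists>i<5. g = petal l i)"
    by (auto simp: mem_omega)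
  moreover have "map emb l \<in> map emb ` F" using l by blast
  ultimately show "f \<in> omega (map emb ` F)"
    using f map_emb_central map_emb_petal[OF assms[OF l]] by (auto simp: mem_omega)
qed

lemma map_emb_Kn: "map emb ` Kn m \<subseteq> Kn (Suc m)"
proof (induction m)
  case 0
  have "map emb P0 = central P0" by (simp add: P0_def central_def cenv_def)
  then show ?case by (simp add: Kn_def omega_def)
next
  case (Suc m)
  have "map emb ` Kn (Suc m) \<subseteq> omega (map emb ` Kn m)"
    using map_emb_omega pentagon_complex.length_face[OF pentagon_complex_Kn] by (simp add: Kn_def)
  also have "\<dots> \<subseteq> omega (Kn (Suc m))" using Suc.IH unfolding omega_def by blast
  finally show ?case by (simp add: Kn_def)
qed

lemma emb_ledges_Kn: "e \<in> ledges (Kn m) \<Longrightarrow> emb ` e \<in> ledges (Kn (Suc m))"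
proof -
  assume "e \<in> ledges (Kn m)"
  then obtain l i where l: "l \<in> Kn m" "i < 5" "e = {l ! i, l ! nxt i}"
    by (auto simp: ledges_def face_edges_def)
  have "length l = 5" using pentagon_complex.length_face[OF pentagon_complex_Kn l(1)] .
  then have "emb ` e \<in> face_edges (map emb l)"
    using l nxt_less[of i] by (auto simp: face_edges_def intro!: exI[of _ i])
  moreover have "map emb l \<in> Kn (Suc m)" using map_emb_Kn l(1) by blast
  ultimately show ?thesis unfolding ledges_def by blast
qed

definition level_neighbours :: "nat \<Rightarrow> (nat \<times> vert) set \<Rightarrow> (nat \<times> vert) set set" where
  "level_neighbours m x = {cls m b | a b. cls m a = x \<and> {a, b} \<in> ledges (Kn m)}"

lemma finite_card_level_neighbours:
  "finite (level_neighbours m x) \<and> card (level_neighbours m x) \<le> 20"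
proof (cases "x \<in> range (cls m)")
  case True
  then obtain a where a: "x = cls m a" by blast
  have "level_neighbours m x \<subseteq> cls m ` {b. {a, b} \<in> ledges (Kn m)}"
    using a inj_cls[of m] by (auto simp: level_neighbours_def inj_eq)
  then show ?thesis using pentagon_complex.finite_card_neighbours[OF pentagon_complex_Kn[of m], of a]
    by (meson card_image_le card_mono finite_imageI finite_subset le_trans)
next
  case False
  then have "level_neighbours m x = {}" by (auto simp: level_neighbours_def)
  then show ?thesis by simp
qed

lemma level_neighbours_Suc: "level_neighbours m x \<subseteq> level_neighbours (Suc m) x"
proof
  fix y assume "y \<in> level_neighbours m x"
  then obtain a b where ab: "y = cls m b" "cls m a = x" "{a, b} \<in> ledges (Kn m)"
    by (auto simp: level_neighbours_def)
  then have "y = cls (Suc m) (emb b)" "cls (Suc m) (emb a) = x" by (simp_all add: cls_Suc_emb)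
  moreover have "{emb a, emb b} \<in> ledges (Kn (Suc m))" using emb_ledges_Kn[OF ab(3)] by simp
  ultimately show "y \<in> level_neighbours (Suc m) x" unfolding level_neighbours_def by blast
qed

lemma KE_neighbours_subset: "{y. {x, y} \<in> KE} \<subseteq> (\<Union>m. level_neighbours m x)"
proof
  fix y assume "y \<in> {y. {x, y} \<in> KE}"
  then obtain m e where xy: "{x, y} = cls m ` e" and e: "e \<in> ledges (Kn m)" by (auto simp: KE_def)
  then obtain a b where ab: "e = {a, b}" by (auto simp: ledges_def face_edges_def)
  have "{a, b} \<in> ledges (Kn m)" "{b, a} \<in> ledges (Kn m)" using e ab by (simp_all add: insert_commute)
  moreover have "{x, y} = {cls m a, cls m b}" using xy ab by simp
  then have "x = cls m a \<and> y = cls m b \<or> x = cls m b \<and> y = cls m a" by (simp add: doubleton_eq_iff)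
  ultimately have "y \<in> level_neighbours m x" unfolding level_neighbours_def by (elim disjE conjE) blast+
  then show "y \<in> (\<Union>m. level_neighbours m x)" by blast
qed

lemma finite_card_Union_increasing:
  fixes N :: "nat \<Rightarrow> 'a set"
  assumes inc: "\<And>m. N m \<subseteq> N (Suc m)" and bound: "\<And>m. finite (N m) \<and> card (N m) \<le> D"
  shows "finite (\<Union>m. N m) \<and> card (\<Union>m. N m) \<le> D"
proof (rule finite_if_finite_subsets_card_bdd)
  fix G assume G: "G \<subseteq> (\<Union>m. N m)" "finite G"
  have "N m \<subseteq> N m' \<or> N m' \<subseteq> N m" for m m'
    using lift_Suc_mono_le[of N, OF inc] by (metis le_cases)
  then have "subset.chain UNIV (range N)" by (auto simp: pred_on.chain_def)
  then obtain B where "B \<in> range N" "G \<subseteq> B"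
    using finite_subset_Union_chain[OF G(2)] G(1) by blast
  then obtain m where "G \<subseteq> N m" by blast
  then have "card G \<le> card (N m)" using bound[of m] by (simp add: card_mono)
  then show "card G \<le> D" using bound[of m] by linarith
qed

lemma finite_card_KE_neighbours: "finite {y. {x, y} \<in> KE} \<and> card {y. {x, y} \<in> KE} \<le> 20"
proof -
  have "finite (\<Union>m. level_neighbours m x) \<and> card (\<Union>m. level_neighbours m x) \<le> 20"
    by (rule finite_card_Union_increasing) (rule level_neighbours_Suc, rule finite_card_level_neighbours)
  then show ?thesis using KE_neighbours_subset by (meson card_mono finite_subset le_trans)
qed

theorem lemmal:
  fixes n :: nat
  shows "\<exists>S :: (nat \<times> vert) set cx set. finite S \<and>
           (\<forall>v \<in> fst K. \<exists>B \<in> S. cx_iso (ball K v n) B)"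
proof -
  have "infinite (UNIV :: (nat \<times> vert) set set)" by (simp add: Finite_Set.finite_set finite_prod)
  then obtain S :: "(nat \<times> vert) set cx set" where S: "finite S"
    and iso: "\<And>X :: (nat \<times> vert) set cx. finite (fst X) \<Longrightarrow> card (fst X) \<le> 21 ^ n \<Longrightarrow>
      fst (snd X) \<subseteq> Pow (fst X) \<Longrightarrow> snd (snd X) \<subseteq> Pow (Pow (fst X)) \<Longrightarrow> \<exists>B\<in>S. cx_iso X B"
    by (rule finite_cx_iso_classes[where N = "21 ^ n"]) blast
  have "\<exists>B\<in>S. cx_iso (ball K v n) B" for v
  proof (rule iso)
    have W: "finite {y. within KE n v y} \<and> card {y. within KE n v y} \<le> 21 ^ n"
      using finite_card_within[OF finite_card_KE_neighbours] by simp
    have sub: "fst (ball K v n) \<subseteq> {y. within KE n v y}"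
      using ball_vertices_within[of K v n] by (simp add: K_def)
    show "finite (fst (ball K v n))" using finite_subset[OF sub] W by blast
    show "card (fst (ball K v n)) \<le> 21 ^ n" using card_mono[OF conjunct1[OF W] sub] W by linarith
    show "fst (snd (ball K v n)) \<subseteq> Pow (fst (ball K v n))" by (rule ball_edges_Pow)
    show "snd (snd (ball K v n)) \<subseteq> Pow (Pow (fst (ball K v n)))" by (rule ball_faces_Pow)
  qed
  then show ?thesis using S by blast
qed

end
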